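(* Let $N\ge1$, let $G=(\mathcal{V},\mathcal{E},P_V)$ and $\tilde G_i=(\mathcal{V}_i,\mathcal{E}_i,P_{V_i})$, $i\le N$, be probabilistic graphs with $G=\bigsqcup_{i\le N}\tilde G_i$ and $\tilde G_1\simeq\tilde G_2\simeq\dots\simeq\tilde G_N$. Then $H_\chi(G)=H_\chi(\tilde G_1)$.
   Context: A probabilistic graph is $(\mathcal{V},\mathcal{E},P_V)$: a finite graph with a probability distribution $P_V$ on its vertices. A coloring is a map $c$ from the vertices to a finite set such that adjacent vertices get different colors; $H_\chi(G)=\inf\{H(c(V)):c\text{ a coloring of }G\}$ with $V\sim P_V$. $G=\bigsqcup_{i\le N}\tilde G_i$ (disjoint union) means: $\mathcal{V}$ is the disjoint union of the $\mathcal{V}_i$; for $v\in\mathcal{V}_i$, $v'\in\mathcal{V}_{i'}$, if $i=i'$ then $vv'\in\mathcal{E}\iff vv'\in\mathcal{E}_i$, and if $i\ne i'$ then $vv'\notin\mathcal{E}$; and $P_{V\mid V\in\mathcal{V}_i}=P_{V_i}$ for all $i$. $G_1\simeq G_2$ (isomorphic probabilistic graphs) means there is a bijection $\psi:\mathcal{V}_1\to\mathcal{V}_2$ with $v v'\in\mathcal{E}_1\iff\psi(v)\psi(v')\in\mathcal{E}_2$ and $P_{V_1}(v)=P_{V_2}(\psi(v))$ for all $v$. *)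

theory Defs
  imports Complex_Main
begin

definition pgraph :: "'v set \<Rightarrow> ('v \<times> 'v) set \<Rightarrow> ('v \<Rightarrow> real) \<Rightarrow> bool" where
  "pgraph V E P \<longleftrightarrow> finite V \<and> E \<subseteq> V \<times> V \<and> sym E \<and> (\<forall>v. (v, v) \<notin> E)
     \<and> (\<forall>v\<in>V. P v \<ge> 0) \<and> sum P V = 1"

text \<open>Colorings; colors are taken in nat (every finite color set embeds into nat).\<close>
definition is_coloring :: "'v set \<Rightarrow> ('v \<times> 'v) set \<Rightarrow> ('v \<Rightarrow> nat) \<Rightarrow> bool" where
  "is_coloring V E c \<longleftrightarrow> (\<forall>u\<in>V. \<forall>v\<in>V. (u, v) \<in> E \<longrightarrow> c u \<noteq> c v)"

definition col_entropy :: "'v set \<Rightarrow> ('v \<Rightarrow> real) \<Rightarrow> ('v \<Rightarrow> nat) \<Rightarrow> real" where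
  "col_entropy V P c =
     - (\<Sum>y\<in>c ` V. (\<Sum>v\<in>{v\<in>V. c v = y}. P v) * log 2 (\<Sum>v\<in>{v\<in>V. c v = y}. P v))"

definition chromatic_entropy :: "'v set \<Rightarrow> ('v \<times> 'v) set \<Rightarrow> ('v \<Rightarrow> real) \<Rightarrow> real" where
  "chromatic_entropy V E P = Inf {col_entropy V P c | c. is_coloring V E c}"

definition pgraph_disj_union ::
  "'v set \<Rightarrow> ('v \<times> 'v) set \<Rightarrow> ('v \<Rightarrow> real) \<Rightarrow> nat \<Rightarrow>
   (nat \<Rightarrow> 'v set) \<Rightarrow> (nat \<Rightarrow> ('v \<times> 'v) set) \<Rightarrow> (nat \<Rightarrow> 'v \<Rightarrow> real) \<Rightarrow> bool" where
  "pgraph_disj_union V E P N Vs Es Ps \<longleftrightarrow>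
     V = (\<Union>i\<in>{1..N}. Vs i)
   \<and> (\<forall>i\<in>{1..N}. \<forall>j\<in>{1..N}. i \<noteq> j \<longrightarrow> Vs i \<inter> Vs j = {})
   \<and> (\<forall>i\<in>{1..N}. \<forall>v\<in>Vs i. \<forall>v'\<in>Vs i. (v, v') \<in> E \<longleftrightarrow> (v, v') \<in> Es i)
   \<and> (\<forall>i\<in>{1..N}. \<forall>j\<in>{1..N}. i \<noteq> j \<longrightarrow> (\<forall>v\<in>Vs i. \<forall>v'\<in>Vs j. (v, v') \<notin> E))
   \<and> (\<forall>i\<in>{1..N}. sum P (Vs i) > 0 \<and> (\<forall>v\<in>Vs i. P v / sum P (Vs i) = Ps i v))"

definition pgraph_iso ::
  "'v set \<Rightarrow> ('v \<times> 'v) set \<Rightarrow> ('v \<Rightarrow> real) \<Rightarrow>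
   'w set \<Rightarrow> ('w \<times> 'w) set \<Rightarrow> ('w \<Rightarrow> real) \<Rightarrow> bool" where
  "pgraph_iso V1 E1 P1 V2 E2 P2 \<longleftrightarrow>
     (\<exists>\<psi>. bij_betw \<psi> V1 V2
        \<and> (\<forall>v\<in>V1. \<forall>v'\<in>V1. (v, v') \<in> E1 \<longleftrightarrow> (\<psi> v, \<psi> v') \<in> E2)
        \<and> (\<forall>v\<in>V1. P1 v = P2 (\<psi> v)))"

end

theory Submission
  imports Defs
begin

(* The colour distribution of a colouring c of G is the mixture, with weights p_i = P(V_i),
   of the colour distributions of the restrictions of c to the components.  Since
   x log x is convex, entropy is concave, so H(c(V)) is at least the p-weighted average of
   the entropies of the restrictions, each of which is at least H_chi(G_1) because the
   components are isomorphic to G_1.  Conversely, transporting one colouring of G_1 to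
   every component yields a colouring of G whose colour distribution is a mixture of
   identical distributions, hence the same as for G_1. *)

lemma pgraph_iso_refl: "pgraph_iso V E P V E P"
  unfolding pgraph_iso_def by (rule exI[of _ id]) auto

lemma pgraph_iso_sym:
  assumes "pgraph_iso V1 E1 P1 V2 E2 P2"
  shows "pgraph_iso V2 E2 P2 V1 E1 P1"
proof -
  obtain \<psi> where bij: "bij_betw \<psi> V1 V2"
    and edges: "\<forall>v\<in>V1. \<forall>v'\<in>V1. (v, v') \<in> E1 \<longleftrightarrow> (\<psi> v, \<psi> v') \<in> E2"
    and probs: "\<forall>v\<in>V1. P1 v = P2 (\<psi> v)"
    using assms unfolding pgraph_iso_def by blast
  let ?\<phi> = "inv_into V1 \<psi>"
  have "bij_betw ?\<phi> V2 V1"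
    using bij by (rule bij_betw_inv_into)
  moreover have "?\<phi> w \<in> V1" and "\<psi> (?\<phi> w) = w" if "w \<in> V2" for w
    using that bij by (auto simp: bij_betw_inv_into_right bij_betw_imp_surj_on inv_into_into)
  ultimately show ?thesis
    unfolding pgraph_iso_def using edges probs by metis
qed

lemma pgraph_iso_trans:
  assumes "pgraph_iso V1 E1 P1 V2 E2 P2" "pgraph_iso V2 E2 P2 V3 E3 P3"
  shows "pgraph_iso V1 E1 P1 V3 E3 P3"
proof -
  obtain \<psi> where bij: "bij_betw \<psi> V1 V2"
    and edges: "\<forall>v\<in>V1. \<forall>v'\<in>V1. (v, v') \<in> E1 \<longleftrightarrow> (\<psi> v, \<psi> v') \<in> E2"
    and probs: "\<forall>v\<in>V1. P1 v = P2 (\<psi> v)"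
    using assms(1) unfolding pgraph_iso_def by blast
  obtain \<chi> where bij': "bij_betw \<chi> V2 V3"
    and edges': "\<forall>v\<in>V2. \<forall>v'\<in>V2. (v, v') \<in> E2 \<longleftrightarrow> (\<chi> v, \<chi> v') \<in> E3"
    and probs': "\<forall>v\<in>V2. P2 v = P3 (\<chi> v)"
    using assms(2) unfolding pgraph_iso_def by blast
  have "\<psi> v \<in> V2" if "v \<in> V1" for v
    using that bij bij_betwE by blast
  then show ?thesis
    unfolding pgraph_iso_def using bij_betw_trans[OF bij bij'] edges edges' probs probs'
    by (intro exI[of _ "\<chi> \<circ> \<psi>"]) auto
qed

lemma pgraph_iso_chain:
  fixes Vs :: "nat \<Rightarrow> 'v set"
  assumes "\<forall>i\<in>{1..<N}. pgraph_iso (Vs i) (Es i) (Ps i) (Vs (i+1)) (Es (i+1)) (Ps (i+1))"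
    and "i \<in> {1..N}"
  shows "pgraph_iso (Vs 1) (Es 1) (Ps 1) (Vs i) (Es i) (Ps i)"
  using assms(2)
proof (induction i)
  case (Suc k)
  show ?case
  proof (cases "k = 0")
    case False
    then show ?thesis
      using Suc assms(1) pgraph_iso_trans by fastforce
  qed (simp add: pgraph_iso_refl)
qed simp

definition color_prob :: "'v set \<Rightarrow> ('v \<Rightarrow> real) \<Rightarrow> ('v \<Rightarrow> nat) \<Rightarrow> nat \<Rightarrow> real" where
  "color_prob V P c y = (\<Sum>v\<in>{v\<in>V. c v = y}. P v)"

lemma col_entropy_color_prob:
  "col_entropy V P c = - (\<Sum>y\<in>c ` V. color_prob V P c y * log 2 (color_prob V P c y))"
  unfolding col_entropy_def color_prob_def ..

lemma col_entropy_sum_superset: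
  assumes "finite C" "c ` V \<subseteq> C"
  shows "col_entropy V P c = - (\<Sum>y\<in>C. color_prob V P c y * log 2 (color_prob V P c y))"
proof -
  have "color_prob V P c y = 0" if "y \<notin> c ` V" for y
    using that unfolding color_prob_def by (metis (mono_tags, lifting) empty_Collect_eq image_eqI sum.empty)
  then show ?thesis
    unfolding col_entropy_color_prob using assms by (intro arg_cong[of _ _ uminus] sum.mono_neutral_left) auto
qed

lemma color_prob_comp_bij:
  assumes "bij_betw \<phi> V W" "\<forall>v\<in>V. P v = Q (\<phi> v)" "\<forall>v\<in>V. c v = d (\<phi> v)"
  shows "color_prob V P c y = color_prob W Q d y"
proof -
  have "bij_betw \<phi> {v\<in>V. c v = y} {w\<in>W. d w = y}"
    using assms(1,3) unfolding bij_betw_def inj_on_def by auto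
  then show ?thesis
    unfolding color_prob_def using assms(2) by (simp add: sum.reindex_bij_betw[symmetric])
qed

lemma col_entropy_comp_bij:
  assumes "bij_betw \<phi> V W" "\<forall>v\<in>V. P v = Q (\<phi> v)"
  shows "col_entropy V P (d \<circ> \<phi>) = col_entropy W Q d"
proof -
  have "(d \<circ> \<phi>) ` V = d ` W"
    using assms(1) by (metis bij_betw_imp_surj_on image_comp)
  then show ?thesis
    unfolding col_entropy_color_prob
    using color_prob_comp_bij[OF assms, where c = "d \<circ> \<phi>" and d = d] by simp
qed

lemma is_coloring_cong: "(\<And>v. v \<in> V \<Longrightarrow> c v = d v) \<Longrightarrow> is_coloring V E c = is_coloring V E d"
  unfolding is_coloring_def by simp

lemma is_coloring_comp_hom:
  assumes "is_coloring W F d" "\<phi> ` V \<subseteq> W" "\<forall>v\<in>V. \<forall>v'\<in>V. (v, v') \<in> E \<longrightarrow> (\<phi> v, \<phi> v') \<in> F"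
  shows "is_coloring V E (d \<circ> \<phi>)"
  using assms unfolding is_coloring_def image_subset_iff comp_apply by blast

lemma is_coloring_exists:
  assumes "finite V" "\<forall>v. (v, v) \<notin> E"
  shows "\<exists>c. is_coloring V E c"
proof -
  obtain c :: "_ \<Rightarrow> nat" where "inj_on c V"
    using finite_imp_inj_to_nat_seg[OF assms(1)] by blast
  then have "is_coloring V E c"
    unfolding is_coloring_def using assms(2) by (metis inj_on_def)
  then show ?thesis
    by blast
qed

lemma col_entropy_nonneg:
  assumes "finite V" "\<forall>v\<in>V. P v \<ge> 0" "sum P V = 1"
  shows "0 \<le> col_entropy V P c"
proof -
  have "color_prob V P c y * log 2 (color_prob V P c y) \<le> 0" for y
  proof -
    let ?q = "color_prob V P c y"
    have "0 \<le> ?q"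
      using assms(2) unfolding color_prob_def by (intro sum_nonneg) auto
    moreover have "?q \<le> 1"
      using assms sum_mono2[OF assms(1), of "{v\<in>V. c v = y}" P] unfolding color_prob_def by auto
    ultimately show ?thesis
      by (cases "?q = 0") (auto intro: mult_nonneg_nonpos)
  qed
  then show ?thesis
    unfolding col_entropy_color_prob by (simp add: sum_nonpos)
qed

lemma chromatic_entropy_le:
  assumes "pgraph V E P" "is_coloring V E c"
  shows "chromatic_entropy V E P \<le> col_entropy V P c"
  unfolding chromatic_entropy_def
proof (rule cInf_lower)
  show "bdd_below {col_entropy V P c | c. is_coloring V E c}"
    using assms(1) col_entropy_nonneg unfolding pgraph_def by (auto intro!: bdd_belowI[where m = 0])
qed (use assms(2) in blast)

lemma chromatic_entropy_greatest:
  assumes "pgraph V E P" "\<And>c. is_coloring V E c \<Longrightarrow> m \<le> col_entropy V P c"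
  shows "m \<le> chromatic_entropy V E P"
  unfolding chromatic_entropy_def
proof (rule cInf_greatest)
  show "{col_entropy V P c | c. is_coloring V E c} \<noteq> {}"
    using assms(1) is_coloring_exists unfolding pgraph_def by auto
qed (use assms(2) in blast)

lemma col_entropies_iso_subset:
  assumes "pgraph_iso V E P W F Q"
  shows "{col_entropy W Q d | d. is_coloring W F d} \<subseteq> {col_entropy V P c | c. is_coloring V E c}"
proof
  obtain \<psi> where bij: "bij_betw \<psi> V W"
    and edges: "\<forall>v\<in>V. \<forall>v'\<in>V. (v, v') \<in> E \<longleftrightarrow> (\<psi> v, \<psi> v') \<in> F"
    and probs: "\<forall>v\<in>V. P v = Q (\<psi> v)"
    using assms unfolding pgraph_iso_def by blast
  fix h assume "h \<in> {col_entropy W Q d | d. is_coloring W F d}"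
  then obtain d where col: "is_coloring W F d" and h: "h = col_entropy W Q d"
    by blast
  have "is_coloring V E (d \<circ> \<psi>)"
    using is_coloring_comp_hom[OF col] bij_betw_imp_surj_on[OF bij] edges by blast
  moreover have "h = col_entropy V P (d \<circ> \<psi>)"
    using h col_entropy_comp_bij[OF bij probs] by simp
  ultimately show "h \<in> {col_entropy V P c | c. is_coloring V E c}"
    by blast
qed

lemma chromatic_entropy_iso:
  assumes "pgraph_iso V1 E1 P1 V2 E2 P2"
  shows "chromatic_entropy V1 E1 P1 = chromatic_entropy V2 E2 P2"
proof -
  have "{col_entropy V1 P1 c | c. is_coloring V1 E1 c} = {col_entropy V2 P2 d | d. is_coloring V2 E2 d}"
    using col_entropies_iso_subset[OF assms] col_entropies_iso_subset[OF pgraph_iso_sym[OF assms]]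
    by (rule subset_antisym[rotated])
  then show ?thesis
    unfolding chromatic_entropy_def by simp
qed

lemma diff_le_mult_ln_diff:
  fixes a b :: real
  assumes "a \<ge> 0" "b > 0"
  shows "a - b \<le> a * (ln a - ln b)"
proof (cases "a = 0")
  case False
  then have "a > 0"
    using assms by simp
  have "ln b - ln a = ln (b / a)"
    using \<open>a > 0\<close> assms by (simp add: ln_div)
  also have "\<dots> \<le> b / a - 1"
    using \<open>a > 0\<close> assms by (intro ln_le_minus_one) simp
  finally have "a * (ln b - ln a) \<le> a * (b / a - 1)"
    using \<open>a > 0\<close> by (intro mult_left_mono) auto
  then show ?thesis
    using \<open>a > 0\<close> by (simp add: algebra_simps)
qed (use assms in simp)

lemma jensen_xlogx:
  fixes p x :: "'i \<Rightarrow> real"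
  assumes "finite I" "\<forall>i\<in>I. p i \<ge> 0" "sum p I = 1" "\<forall>i\<in>I. x i \<ge> 0"
  shows "(\<Sum>i\<in>I. p i * x i) * log 2 (\<Sum>i\<in>I. p i * x i) \<le> (\<Sum>i\<in>I. p i * (x i * log 2 (x i)))"
proof -
  let ?s = "\<Sum>i\<in>I. p i * x i"
  have "?s \<ge> 0"
    using assms by (intro sum_nonneg) simp
  show ?thesis
  proof (cases "?s = 0")
    case True
    then have "\<forall>i\<in>I. p i * x i = 0"
      using assms by (subst (asm) sum_nonneg_eq_0_iff) auto
    then have "(\<Sum>i\<in>I. p i * (x i * log 2 (x i))) = 0"
      by (intro sum.neutral) (simp add: mult.assoc[symmetric])
    then show ?thesis
      using True by simp
  next
    case False
    with \<open>?s \<ge> 0\<close> have "?s > 0"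
      by simp
    have "0 = (\<Sum>i\<in>I. p i * (x i - ?s))"
      using assms(3) by (simp add: right_diff_distrib sum_subtractf sum_distrib_right[symmetric])
    also have "\<dots> \<le> (\<Sum>i\<in>I. p i * (x i * (ln (x i) - ln ?s)))"
      \<comment> \<open>x ln x lies above its tangent line at ?s\<close>
      using assms diff_le_mult_ln_diff[OF _ \<open>?s > 0\<close>] by (intro sum_mono mult_left_mono) auto
    also have "\<dots> = (\<Sum>i\<in>I. p i * (x i * ln (x i))) - ?s * ln ?s"
      by (simp add: right_diff_distrib sum_subtractf sum_distrib_right mult.assoc)
    finally have "?s * ln ?s / ln 2 \<le> (\<Sum>i\<in>I. p i * (x i * ln (x i))) / ln 2"
      by (intro divide_right_mono) auto
    then show ?thesis
      by (simp add: log_def sum_divide_distrib)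
  qed
qed

lemma disj_union_component_unique:
  assumes "pgraph_disj_union V E P N Vs Es Ps" "i \<in> {1..N}" "j \<in> {1..N}" "v \<in> Vs i" "v \<in> Vs j"
  shows "i = j"
  using assms unfolding pgraph_disj_union_def by blast

lemma sum_disj_union_filter:
  assumes "pgraph_disj_union V E P N Vs Es Ps" "finite V"
  shows "(\<Sum>v\<in>{v\<in>V. R v}. f v) = (\<Sum>i=1..N. \<Sum>v\<in>{v\<in>Vs i. R v}. f v)"
proof -
  have split: "{v\<in>V. R v} = (\<Union>i\<in>{1..N}. {v\<in>Vs i. R v})"
    using assms(1) unfolding pgraph_disj_union_def by auto
  have "finite (Vs i)" if "i \<in> {1..N}" for i
    using assms that unfolding pgraph_disj_union_def by (auto intro: finite_subset)
  then show ?thesis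
    unfolding split using disj_union_component_unique[OF assms(1)] by (subst sum.UNION_disjoint) auto
qed

lemma sum_disj_union_weights:
  assumes "pgraph_disj_union V E P N Vs Es Ps" "finite V"
  shows "(\<Sum>i=1..N. sum P (Vs i)) = sum P V"
  using sum_disj_union_filter[OF assms, where R = "\<lambda>_. True" and f = P] by simp

lemma color_prob_disj_union:
  assumes "pgraph_disj_union V E P N Vs Es Ps" "finite V"
  shows "color_prob V P c y = (\<Sum>i=1..N. sum P (Vs i) * color_prob (Vs i) (Ps i) c y)"
proof -
  have "P v = sum P (Vs i) * Ps i v" if "i \<in> {1..N}" "v \<in> Vs i" for i v
    using assms(1) that unfolding pgraph_disj_union_def
    by (metis less_irrefl nonzero_mult_div_cancel_left times_divide_eq_right)
  then show ?thesis
    unfolding color_prob_def sum_disj_union_filter[OF assms] sum_distrib_left by simp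
qed

lemma is_coloring_disj_union_component:
  assumes "pgraph_disj_union V E P N Vs Es Ps" "is_coloring V E c" "i \<in> {1..N}"
  shows "is_coloring (Vs i) (Es i) c"
proof -
  have "Vs i \<subseteq> V" and "\<forall>v\<in>Vs i. \<forall>v'\<in>Vs i. (v, v') \<in> Es i \<longrightarrow> (v, v') \<in> E"
    using assms(1,3) unfolding pgraph_disj_union_def by auto
  then show ?thesis
    using assms(2) unfolding is_coloring_def by blast
qed

lemma is_coloring_disj_union:
  assumes "pgraph_disj_union V E P N Vs Es Ps" "\<And>i. i \<in> {1..N} \<Longrightarrow> is_coloring (Vs i) (Es i) c"
  shows "is_coloring V E c"
  unfolding is_coloring_def
proof (intro ballI impI)
  fix u v assume "u \<in> V" "v \<in> V" and uv: "(u, v) \<in> E"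
  then obtain i j where i: "i \<in> {1..N}" "u \<in> Vs i" and j: "j \<in> {1..N}" "v \<in> Vs j"
    using assms(1) unfolding pgraph_disj_union_def by blast
  have "i = j"
    using assms(1) i j uv unfolding pgraph_disj_union_def by blast
  then have "(u, v) \<in> Es i"
    using assms(1) i j uv unfolding pgraph_disj_union_def by blast
  then show "c u \<noteq> c v"
    using assms(2)[OF i(1)] i j \<open>i = j\<close> unfolding is_coloring_def by blast
qed

lemma chromatic_entropy_disj_union_ge:
  assumes "pgraph V E P" "\<forall>i\<in>{1..N}. pgraph (Vs i) (Es i) (Ps i)"
    and "pgraph_disj_union V E P N Vs Es Ps"
  shows "(\<Sum>i=1..N. sum P (Vs i) * chromatic_entropy (Vs i) (Es i) (Ps i)) \<le> chromatic_entropy V E P"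
proof (rule chromatic_entropy_greatest[OF assms(1)])
  fix c assume col: "is_coloring V E c"
  let ?p = "\<lambda>i. sum P (Vs i)" and ?q = "\<lambda>i y. color_prob (Vs i) (Ps i) c y"
  have fin: "finite V" and P1: "sum P V = 1"
    using assms(1) unfolding pgraph_def by auto
  have p_nonneg: "\<forall>i\<in>{1..N}. ?p i \<ge> 0" and colors: "\<forall>i\<in>{1..N}. c ` Vs i \<subseteq> c ` V"
    using assms(3) unfolding pgraph_disj_union_def by auto
  have q_nonneg: "\<forall>i\<in>{1..N}. ?q i y \<ge> 0" for y
    using assms(2) unfolding pgraph_def color_prob_def by (auto intro: sum_nonneg)
  have "(\<Sum>i=1..N. ?p i * chromatic_entropy (Vs i) (Es i) (Ps i))
      \<le> (\<Sum>i=1..N. ?p i * col_entropy (Vs i) (Ps i) c)"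
    using p_nonneg assms(2) is_coloring_disj_union_component[OF assms(3) col]
    by (intro sum_mono mult_left_mono chromatic_entropy_le) auto
  also have "\<dots> = (\<Sum>i=1..N. ?p i * - (\<Sum>y\<in>c ` V. ?q i y * log 2 (?q i y)))"
    using fin colors by (intro sum.cong refl arg_cong[where f = "(*) _"] col_entropy_sum_superset) auto
  also have "\<dots> = - (\<Sum>y\<in>c ` V. \<Sum>i=1..N. ?p i * (?q i y * log 2 (?q i y)))"
    by (subst sum.swap) (simp add: sum_distrib_left sum_negf)
  also have "\<dots> \<le> - (\<Sum>y\<in>c ` V. (\<Sum>i=1..N. ?p i * ?q i y) * log 2 (\<Sum>i=1..N. ?p i * ?q i y))"
    using p_nonneg q_nonneg sum_disj_union_weights[OF assms(3) fin] P1
    by (intro le_imp_neg_le sum_mono jensen_xlogx) auto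
  also have "\<dots> = col_entropy V P c"
    unfolding col_entropy_color_prob color_prob_disj_union[OF assms(3) fin] ..
  finally show "(\<Sum>i=1..N. ?p i * chromatic_entropy (Vs i) (Es i) (Ps i)) \<le> col_entropy V P c" .
qed

lemma col_entropy_disj_union_transport:
  assumes "pgraph_disj_union V E P N Vs Es Ps" "finite V" "sum P V = 1" "finite W"
    and "\<And>i. i \<in> {1..N} \<Longrightarrow> bij_betw (\<phi> i) (Vs i) W"
    and "\<And>i. i \<in> {1..N} \<Longrightarrow> \<forall>v\<in>Vs i. Ps i v = Q (\<phi> i v)"
    and "\<And>i v. i \<in> {1..N} \<Longrightarrow> v \<in> Vs i \<Longrightarrow> c v = d (\<phi> i v)"
  shows "col_entropy V P c = col_entropy W Q d"
proof -
  have "c ` V \<subseteq> d ` W"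
  proof
    fix y assume "y \<in> c ` V"
    then obtain v where "v \<in> V" "y = c v"
      by blast
    moreover obtain i where "i \<in> {1..N}" "v \<in> Vs i"
      using \<open>v \<in> V\<close> assms(1) unfolding pgraph_disj_union_def by blast
    ultimately show "y \<in> d ` W"
      using assms(5,7) bij_betwE by fastforce
  qed
  have same_prob: "color_prob V P c y = color_prob W Q d y" for y
  proof -
    have "color_prob (Vs i) (Ps i) c y = color_prob W Q d y" if "i \<in> {1..N}" for i
      using color_prob_comp_bij[OF assms(5,6)[OF that]] assms(7)[OF that] by blast
    then show ?thesis
      using color_prob_disj_union[OF assms(1,2)] sum_disj_union_weights[OF assms(1,2)] assms(3)
      by (simp add: sum_distrib_right[symmetric])
  qed
  have "col_entropy V P c = - (\<Sum>y\<in>d ` W. color_prob V P c y * log 2 (color_prob V P c y))"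
    using assms(4) \<open>c ` V \<subseteq> d ` W\<close> by (intro col_entropy_sum_superset) auto
  also have "\<dots> = col_entropy W Q d"
    unfolding same_prob col_entropy_color_prob ..
  finally show ?thesis .
qed

lemma chromatic_entropy_disj_union_le:
  assumes "pgraph V E P" "pgraph W F Q" "pgraph_disj_union V E P N Vs Es Ps"
    and "\<forall>i\<in>{1..N}. pgraph_iso (Vs i) (Es i) (Ps i) W F Q"
  shows "chromatic_entropy V E P \<le> chromatic_entropy W F Q"
proof (rule chromatic_entropy_greatest[OF assms(2)])
  fix d assume col: "is_coloring W F d"
  obtain \<phi> where "\<forall>i\<in>{1..N}. bij_betw (\<phi> i) (Vs i) W
      \<and> (\<forall>v\<in>Vs i. \<forall>v'\<in>Vs i. (v, v') \<in> Es i \<longleftrightarrow> (\<phi> i v, \<phi> i v') \<in> F)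
      \<and> (\<forall>v\<in>Vs i. Ps i v = Q (\<phi> i v))"
    using assms(4) unfolding pgraph_iso_def by (rule bchoice[elim_format]) blast
  then have bij: "\<And>i. i \<in> {1..N} \<Longrightarrow> bij_betw (\<phi> i) (Vs i) W"
    and edges: "\<And>i. i \<in> {1..N} \<Longrightarrow> \<forall>v\<in>Vs i. \<forall>v'\<in>Vs i. (v, v') \<in> Es i \<longrightarrow> (\<phi> i v, \<phi> i v') \<in> F"
    and probs: "\<And>i. i \<in> {1..N} \<Longrightarrow> \<forall>v\<in>Vs i. Ps i v = Q (\<phi> i v)"
    by auto
  define c where "c v = d (\<phi> (THE i. i \<in> {1..N} \<and> v \<in> Vs i) v)" for v
  have c_component: "c v = d (\<phi> i v)" if "i \<in> {1..N}" "v \<in> Vs i" for i v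
  proof -
    have "(THE i. i \<in> {1..N} \<and> v \<in> Vs i) = i"
      using that disj_union_component_unique[OF assms(3)] by blast
    then show ?thesis
      by (simp add: c_def)
  qed
  have "is_coloring (Vs i) (Es i) c" if "i \<in> {1..N}" for i
  proof -
    have "is_coloring (Vs i) (Es i) (d \<circ> \<phi> i)"
      using is_coloring_comp_hom[OF col _ edges[OF that]] bij[OF that] bij_betw_imp_surj_on by blast
    then show ?thesis
      using is_coloring_cong[of "Vs i" c "d \<circ> \<phi> i" "Es i"] c_component[OF that] by simp
  qed
  then have "chromatic_entropy V E P \<le> col_entropy V P c"
    using chromatic_entropy_le[OF assms(1) is_coloring_disj_union[OF assms(3)]] by blast
  also have "\<dots> = col_entropy W Q d"
    using assms(1,2) bij probs c_component unfolding pgraph_def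
    by (intro col_entropy_disj_union_transport[OF assms(3)]) auto
  finally show "chromatic_entropy V E P \<le> col_entropy W Q d" .
qed

theorem lemma2:
  fixes V :: "'v set" and E :: "('v \<times> 'v) set" and P :: "'v \<Rightarrow> real"
    and N :: nat and Vs :: "nat \<Rightarrow> 'v set" and Es :: "nat \<Rightarrow> ('v \<times> 'v) set"
    and Ps :: "nat \<Rightarrow> 'v \<Rightarrow> real"
  assumes "N \<ge> 1"
    and "pgraph V E P"
    and "\<forall>i\<in>{1..N}. pgraph (Vs i) (Es i) (Ps i)"
    and "pgraph_disj_union V E P N Vs Es Ps"
    and "\<forall>i\<in>{1..<N}. pgraph_iso (Vs i) (Es i) (Ps i) (Vs (i+1)) (Es (i+1)) (Ps (i+1))"
  shows "chromatic_entropy V E P = chromatic_entropy (Vs 1) (Es 1) (Ps 1)"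
proof -
  let ?H1 = "chromatic_entropy (Vs 1) (Es 1) (Ps 1)"
  have iso: "pgraph_iso (Vs 1) (Es 1) (Ps 1) (Vs i) (Es i) (Ps i)" if "i \<in> {1..N}" for i
    using pgraph_iso_chain[OF assms(5) that] .
  have weights: "(\<Sum>i=1..N. sum P (Vs i)) = 1"
    using sum_disj_union_weights[OF assms(4)] assms(2) unfolding pgraph_def by simp
  have "(\<Sum>i=1..N. sum P (Vs i) * chromatic_entropy (Vs i) (Es i) (Ps i))
      = (\<Sum>i=1..N. sum P (Vs i) * ?H1)"
    using chromatic_entropy_iso[OF iso] by (intro sum.cong refl) metis
  also have "\<dots> = ?H1"
    using weights by (simp add: sum_distrib_right[symmetric])
  finally have "?H1 \<le> chromatic_entropy V E P"
    using chromatic_entropy_disj_union_ge[OF assms(2,3,4)] by simp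
  moreover have "chromatic_entropy V E P \<le> ?H1"
  proof (rule chromatic_entropy_disj_union_le[OF assms(2) _ assms(4)])
    show "pgraph (Vs 1) (Es 1) (Ps 1)"
      using assms(1,3) by simp
    show "\<forall>i\<in>{1..N}. pgraph_iso (Vs i) (Es i) (Ps i) (Vs 1) (Es 1) (Ps 1)"
      using iso pgraph_iso_sym by blast
  qed
  ultimately show ?thesis
    by simp
qed

end
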